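(* Assume (H4) and (H5) of the standing setting. Let $T>0$, $u^0\in D(\varphi)$, $f\in L^2(0,T;H)$, $\Delta t>0$ and $N\in\mathbb N$ with $N\Delta t\le T$, and suppose $\{u^n\}_{n=1}^N\subset W\cap D(\varphi)$ solve the semi-implicit scheme (S). Then there is a constant $M>0$ depending only on $\theta_2$, $C_{\mathrm{reg}}$, $C_{\varphi2}$ (and the constants in (H4)), and independent of $n,N,\Delta t,u^0,f$, such that for all $n=1,\dots,N$, $$\Big\|\frac{u^n-u^{n-1}}{\Delta t}\Big\|_H^2+\frac{\|u^n\|_V^2-\|u^{n-1}\|_V^2+\|u^n-u^{n-1}\|_V^2}{\Delta t}+\frac{2(\varphi(u^n)-\varphi(u^{n-1}))}{\Delta t}\le M\big(\|u^{n-1}\|_V^{2\theta_2}\|u^n\|_V^2+\|f^n\|_H^2+1\big).$$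
   Context: Standing setting. $V\subset H\subset V'$ is a Gelfand triple of real Hilbert spaces ($H$ identified with its dual), with continuous and dense embeddings, and the embedding $V\hookrightarrow H$ is compact. $(\cdot,\cdot)$ denotes the inner product of $H$ and $\langle\cdot,\cdot\rangle$ the duality pairing between $V'$ and $V$ (extending $(\cdot,\cdot)$). $a:V\times V\to\mathbb R$ is a bounded bilinear form with $a(u,u)\ge\alpha\|u\|^2$ for some $\alpha>0$; the norm of $V$ is taken to be $\|u\|_V:=\sqrt{a(u,u)}$. $B:V\times V\to V'$ is a bilinear operator with $|\langle B(u,v),w\rangle|\le C_B\|u\|_V\|v\|_V\|w\|_V$. $\varphi:V\to(-\infty,+\infty]$ is convex, proper and lower semicontinuous, $D(\varphi)=\{v:\varphi(v)<\infty\}$, $\partial\varphi(u)=\{\xi\in V':\langle\xi,v-u\rangle\le\varphi(v)-\varphi(u)\ \forall v\in V\}$, $D(\partial\varphi)=\{u:\partial\varphi(u)\neq\emptyset\}$. $W\subset V$ is a Hilbert space whose embedding into $V$ is dense and compact. An element $g\in V'$ belongs to $H$ if there is $h\in H$ with $\langle g,v\rangle=(h,v)$ for all $v\in V$; then $\|g\|_H:=\|h\|_H$. (H4) There are $C>0$, $\gamma\in(0,1]$ such that for $u\in V$, $v\in W$, $B(u,v)$ belongs to $H$ and $\|B(u,v)\|_H\le C\|u\|_V\|v\|_V^\gamma\|v\|_W^{1-\gamma}$. Set $\theta_2:=1/\gamma\ge1$. (H5) There are constants $C_{\mathrm{reg}},C_{\varphi2}>0$ such that whenever $u\in D(\varphi)$,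 $f\in H$ satisfy $a(u,v-u)+\varphi(v)-\varphi(u)\ge\langle f,v-u\rangle$ for all $v\in V$, then $u\in W\cap D(\partial\varphi)$ and $\|u\|_W\le C_{\mathrm{reg}}\|f\|_H+C_{\varphi2}$. Scheme (S): with $f^n:=\frac1{\Delta t}\int_{(n-1)\Delta t}^{n\Delta t}f(t)\,dt$, for $n=1,\dots,N$, $$\Big(\frac{u^n-u^{n-1}}{\Delta t},v-u^n\Big)+a(u^n,v-u^n)+\langle B(u^{n-1},u^n),v-u^n\rangle+\varphi(v)-\varphi(u^n)\ge(f^n,v-u^n)\quad\forall v\in V.$$
   Formalization: The bilinear form a is also symmetric, a(u,v) = a(v,u) for all u, v in V. The statement above fails without it. *)

theory Defs
  imports "HOL-Analysis.Analysis"
begin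

(* H is the type 'h (a real Hilbert space); V and W are subsets of 'h carrying
   their own inner products a (on V) and wi (on W).
   Elements of V' are represented as real functions g on 'h, of which only the
   values on V matter; the duality pairing <g,v> is g v. *)

definition Vnorm :: "('h \<Rightarrow> 'h \<Rightarrow> real) \<Rightarrow> 'h \<Rightarrow> real" where
  "Vnorm a u = sqrt (a u u)"

definition lin_subspace :: "'h::real_vector set \<Rightarrow> bool" where
  "lin_subspace S \<longleftrightarrow> 0 \<in> S \<and> (\<forall>x\<in>S. \<forall>y\<in>S. x + y \<in> S) \<and> (\<forall>c. \<forall>x\<in>S. c *\<^sub>R x \<in> S)"

definition hilbert_form :: "'h::real_vector set \<Rightarrow> ('h \<Rightarrow> 'h \<Rightarrow> real) \<Rightarrow> bool" where
  "hilbert_form S b \<longleftrightarrow> lin_subspace S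
     \<and> (\<forall>x\<in>S. \<forall>y\<in>S. \<forall>z\<in>S. b (x + y) z = b x z + b y z)
     \<and> (\<forall>c. \<forall>x\<in>S. \<forall>z\<in>S. b (c *\<^sub>R x) z = c * b x z)
     \<and> (\<forall>x\<in>S. \<forall>y\<in>S. b x y = b y x)
     \<and> (\<forall>x\<in>S. x \<noteq> 0 \<longrightarrow> b x x > 0)
     \<and> (\<forall>X :: nat \<Rightarrow> 'h. (\<forall>k. X k \<in> S) \<and> (\<forall>e>0. \<exists>K. \<forall>m\<ge>K. \<forall>n\<ge>K. Vnorm b (X m - X n) < e)
            \<longrightarrow> (\<exists>l\<in>S. (\<lambda>k. Vnorm b (X k - l)) \<longlonglongrightarrow> 0))"

definition gelfand_setting :: "'h::real_inner set \<Rightarrow> ('h \<Rightarrow> 'h \<Rightarrow> real) \<Rightarrow> bool" where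
  "gelfand_setting V a \<longleftrightarrow> hilbert_form V a
     \<and> (\<exists>c::real>0. \<forall>u\<in>V. norm u \<le> c * Vnorm a u)
     \<and> closure V = UNIV
     \<and> (\<forall>(X :: nat \<Rightarrow> 'h) (K :: real). (\<forall>k. X k \<in> V) \<and> (\<forall>k. Vnorm a (X k) \<le> K)
            \<longrightarrow> (\<exists>(r :: nat \<Rightarrow> nat) (l :: 'h). strict_mono r \<and> (X \<circ> r) \<longlonglongrightarrow> l))"

definition dual_elem :: "'h::real_vector set \<Rightarrow> ('h \<Rightarrow> 'h \<Rightarrow> real) \<Rightarrow> ('h \<Rightarrow> real) \<Rightarrow> bool" where
  "dual_elem V a g \<longleftrightarrow> (\<forall>x\<in>V. \<forall>y\<in>V. g (x + y) = g x + g y)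
     \<and> (\<forall>c. \<forall>x\<in>V. g (c *\<^sub>R x) = c * g x)
     \<and> (\<exists>K. \<forall>x\<in>V. \<bar>g x\<bar> \<le> K * Vnorm a x)"

definition B_ok :: "'h::real_vector set \<Rightarrow> ('h \<Rightarrow> 'h \<Rightarrow> real) \<Rightarrow> ('h \<Rightarrow> 'h \<Rightarrow> 'h \<Rightarrow> real) \<Rightarrow> real \<Rightarrow> bool" where
  "B_ok V a B CB \<longleftrightarrow>
     (\<forall>u\<in>V. \<forall>v\<in>V. dual_elem V a (B u v))
     \<and> (\<forall>u1\<in>V. \<forall>u2\<in>V. \<forall>v\<in>V. \<forall>w\<in>V. B (u1 + u2) v w = B u1 v w + B u2 v w)
     \<and> (\<forall>c. \<forall>u\<in>V. \<forall>v\<in>V. \<forall>w\<in>V. B (c *\<^sub>R u) v w = c * B u v w)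
     \<and> (\<forall>u\<in>V. \<forall>v1\<in>V. \<forall>v2\<in>V. \<forall>w\<in>V. B u (v1 + v2) w = B u v1 w + B u v2 w)
     \<and> (\<forall>c. \<forall>u\<in>V. \<forall>v\<in>V. \<forall>w\<in>V. B u (c *\<^sub>R v) w = c * B u v w)
     \<and> (\<forall>u\<in>V. \<forall>v\<in>V. \<forall>w\<in>V. \<bar>B u v w\<bar> \<le> CB * Vnorm a u * Vnorm a v * Vnorm a w)"

definition phi_ok :: "'h::real_vector set \<Rightarrow> ('h \<Rightarrow> 'h \<Rightarrow> real) \<Rightarrow> ('h \<Rightarrow> ereal) \<Rightarrow> bool" where
  "phi_ok V a phi \<longleftrightarrow> (\<forall>v\<in>V. phi v \<noteq> -\<infinity>)
     \<and> (\<exists>v\<in>V. phi v < \<infinity>)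
     \<and> (\<forall>x\<in>V. \<forall>y\<in>V. \<forall>t::real. 0 \<le> t \<and> t \<le> 1 \<longrightarrow>
          phi ((1 - t) *\<^sub>R x + t *\<^sub>R y) \<le> ereal (1 - t) * phi x + ereal t * phi y)
     \<and> (\<forall>x (X :: nat \<Rightarrow> 'h). x \<in> V \<and> (\<forall>k. X k \<in> V) \<and> (\<lambda>k. Vnorm a (X k - x)) \<longlonglongrightarrow> 0
            \<longrightarrow> phi x \<le> liminf (\<lambda>k. phi (X k)))"

definition Dphi :: "'h set \<Rightarrow> ('h \<Rightarrow> ereal) \<Rightarrow> 'h set" where
  "Dphi V phi = {v \<in> V. phi v < \<infinity>}"

definition subdiff :: "'h::real_vector set \<Rightarrow> ('h \<Rightarrow> 'h \<Rightarrow> real) \<Rightarrow> ('h \<Rightarrow> ereal) \<Rightarrow> 'h \<Rightarrow> ('h \<Rightarrow> real) set" where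
  "subdiff V a phi u = {\<xi>. u \<in> Dphi V phi \<and> dual_elem V a \<xi>
       \<and> (\<forall>v\<in>V. ereal (\<xi> (v - u)) \<le> phi v - phi u)}"

definition Dsubdiff :: "'h::real_vector set \<Rightarrow> ('h \<Rightarrow> 'h \<Rightarrow> real) \<Rightarrow> ('h \<Rightarrow> ereal) \<Rightarrow> 'h set" where
  "Dsubdiff V a phi = {u \<in> V. subdiff V a phi u \<noteq> {}}"

definition W_ok :: "'h::real_vector set \<Rightarrow> ('h \<Rightarrow> 'h \<Rightarrow> real) \<Rightarrow> 'h set \<Rightarrow> ('h \<Rightarrow> 'h \<Rightarrow> real) \<Rightarrow> bool" where
  "W_ok V a W wi \<longleftrightarrow> W \<subseteq> V \<and> hilbert_form W wi
     \<and> (\<exists>c::real>0. \<forall>u\<in>W. Vnorm a u \<le> c * Vnorm wi u)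
     \<and> (\<forall>v\<in>V. \<forall>e>0. \<exists>w\<in>W. Vnorm a (v - w) < e)
     \<and> (\<forall>(X :: nat \<Rightarrow> 'h) (K :: real). (\<forall>k. X k \<in> W) \<and> (\<forall>k. Vnorm wi (X k) \<le> K)
            \<longrightarrow> (\<exists>r. \<exists>l\<in>V. strict_mono r \<and> (\<lambda>k. Vnorm a (X (r k) - l)) \<longlonglongrightarrow> 0))"

definition in_H :: "'h::real_inner set \<Rightarrow> ('h \<Rightarrow> real) \<Rightarrow> bool" where
  "in_H V g \<longleftrightarrow> (\<exists>h. \<forall>v\<in>V. g v = h \<bullet> v)"

definition normH :: "'h::real_inner set \<Rightarrow> ('h \<Rightarrow> real) \<Rightarrow> real" where
  "normH V g = norm (SOME h. \<forall>v\<in>V. g v = h \<bullet> v)"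

definition H4 :: "'h::real_inner set \<Rightarrow> ('h \<Rightarrow> 'h \<Rightarrow> real) \<Rightarrow> ('h \<Rightarrow> 'h \<Rightarrow> 'h \<Rightarrow> real)
     \<Rightarrow> 'h set \<Rightarrow> ('h \<Rightarrow> 'h \<Rightarrow> real) \<Rightarrow> real \<Rightarrow> real \<Rightarrow> bool" where
  "H4 V a B W wi C \<gamma> \<longleftrightarrow> C > 0 \<and> 0 < \<gamma> \<and> \<gamma> \<le> 1
     \<and> (\<forall>u\<in>V. \<forall>v\<in>W. in_H V (B u v)
          \<and> normH V (B u v) \<le> C * Vnorm a u * Vnorm a v powr \<gamma> * Vnorm wi v powr (1 - \<gamma>))"

definition H5 :: "'h::real_inner set \<Rightarrow> ('h \<Rightarrow> 'h \<Rightarrow> real) \<Rightarrow> ('h \<Rightarrow> ereal)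
     \<Rightarrow> 'h set \<Rightarrow> ('h \<Rightarrow> 'h \<Rightarrow> real) \<Rightarrow> real \<Rightarrow> real \<Rightarrow> bool" where
  "H5 V a phi W wi Creg Cphi2 \<longleftrightarrow> Creg > 0 \<and> Cphi2 > 0
     \<and> (\<forall>u f. u \<in> Dphi V phi
          \<and> (\<forall>v\<in>V. ereal (a u (v - u)) + phi v - phi u \<ge> ereal (f \<bullet> (v - u)))
          \<longrightarrow> u \<in> W \<and> u \<in> Dsubdiff V a phi \<and> Vnorm wi u \<le> Creg * norm f + Cphi2)"

definition favg :: "(real \<Rightarrow> 'h::{real_inner,banach,second_countable_topology}) \<Rightarrow> real \<Rightarrow> nat \<Rightarrow> 'h" where
  "favg f dt n = (1 / dt) *\<^sub>R (LINT t:{real (n - 1) * dt .. real n * dt}|lborel. f t)"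

definition L2H :: "real \<Rightarrow> (real \<Rightarrow> 'h::{real_inner,banach,second_countable_topology}) \<Rightarrow> bool" where
  "L2H T f \<longleftrightarrow> set_borel_measurable lborel {0..T} f
     \<and> set_integrable lborel {0..T} (\<lambda>t. (norm (f t))\<^sup>2)"

definition scheme :: "'h::{real_inner,banach,second_countable_topology} set \<Rightarrow> ('h \<Rightarrow> 'h \<Rightarrow> real)
     \<Rightarrow> ('h \<Rightarrow> 'h \<Rightarrow> 'h \<Rightarrow> real) \<Rightarrow> ('h \<Rightarrow> ereal) \<Rightarrow> (real \<Rightarrow> 'h) \<Rightarrow> real \<Rightarrow> nat
     \<Rightarrow> (nat \<Rightarrow> 'h) \<Rightarrow> bool" where
  "scheme V a B phi f dt N u \<longleftrightarrow> (\<forall>n\<in>{1..N}. \<forall>v\<in>V.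
      ereal (((1 / dt) *\<^sub>R (u n - u (n - 1))) \<bullet> (v - u n) + a (u n) (v - u n)
             + B (u (n - 1)) (u n) (v - u n)) + phi v - phi (u n)
      \<ge> ereal (favg f dt n \<bullet> (v - u n)))"

end

theory Submission
  imports Defs
begin

(* Write delta = (u^n - u^(n-1)) / dt and let h in H represent B(u^(n-1), u^n), as (H4) allows.
   Testing (S) with v = u^(n-1) and using 2 a(u, u - p) = |u|_V^2 - |p|_V^2 + |u - p|_V^2 gives
     2 |delta|^2 + (increments of |.|_V^2 and phi) / dt <= 2 |delta| (|f^n| + |h|).
   Moreover u^n solves the elliptic inequality of (H5) with right-hand side f^n - delta - h, so
   |u^n|_W <= C_reg (|f^n| + |delta| + |h|) + C_phi2. Inserting this into (H4) and splitting
   |u^n|_V^gamma |u^n|_W^(1-gamma) by a weighted Young inequality yields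
     |h| <= c1 |u^(n-1)|_V^(1/gamma) |u^n|_V + (|f^n| + |delta| + |h|) / 8 + c2,
   so |h| is absorbed, and the remaining |delta| terms are absorbed by the left-hand side. *)

lemma lin_subspace_diff: "lin_subspace S \<Longrightarrow> x \<in> S \<Longrightarrow> y \<in> S \<Longrightarrow> x - y \<in> S"
  unfolding lin_subspace_def by (metis diff_conv_add_uminus scaleR_minus1_left)

lemma hilbert_form_lin_subspace: "hilbert_form S b \<Longrightarrow> lin_subspace S"
  by (simp add: hilbert_form_def)

lemma hilbert_form_sym: "hilbert_form S b \<Longrightarrow> x \<in> S \<Longrightarrow> y \<in> S \<Longrightarrow> b x y = b y x"
  by (simp add: hilbert_form_def)

lemma hilbert_form_add_left:
  "hilbert_form S b \<Longrightarrow> x \<in> S \<Longrightarrow> y \<in> S \<Longrightarrow> z \<in> S \<Longrightarrow> b (x + y) z = b x z + b y z"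
  by (simp add: hilbert_form_def)

lemma hilbert_form_diff_left:
  assumes "hilbert_form S b" "x \<in> S" "y \<in> S" "z \<in> S"
  shows "b (x - y) z = b x z - b y z"
proof -
  have "x - y \<in> S"
    using assms by (simp add: hilbert_form_lin_subspace lin_subspace_diff)
  then show ?thesis
    using hilbert_form_add_left[OF assms(1) _ assms(3,4), of "x - y"] by simp
qed

lemma hilbert_form_diff_right:
  assumes "hilbert_form S b" "x \<in> S" "y \<in> S" "z \<in> S"
  shows "b x (y - z) = b x y - b x z"
proof -
  have "y - z \<in> S"
    using assms by (simp add: hilbert_form_lin_subspace lin_subspace_diff)
  then have "b x (y - z) = b (y - z) x"
    by (rule hilbert_form_sym[OF assms(1,2)])
  also have "\<dots> = b x y - b x z"
    using hilbert_form_diff_left[OF assms(1,3,4,2)] assms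
    by (simp add: hilbert_form_sym[of S b y x] hilbert_form_sym[of S b z x])
  finally show ?thesis .
qed

lemma hilbert_form_nonneg:
  assumes "hilbert_form S b" "x \<in> S"
  shows "0 \<le> b x x"
proof (cases "x = 0")
  case True
  then show ?thesis
    using hilbert_form_add_left[OF assms(1,2,2,2)] by simp
next
  case False
  then show ?thesis
    using assms by (simp add: hilbert_form_def less_imp_le)
qed

lemma Vnorm_nonneg: "hilbert_form S b \<Longrightarrow> x \<in> S \<Longrightarrow> 0 \<le> Vnorm b x"
  by (simp add: Vnorm_def hilbert_form_nonneg)

lemma Vnorm_power2: "hilbert_form S b \<Longrightarrow> x \<in> S \<Longrightarrow> (Vnorm b x)\<^sup>2 = b x x"
  by (simp add: Vnorm_def hilbert_form_nonneg)

lemma hilbert_form_diff_identity: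
  assumes b: "hilbert_form S b" and u: "u \<in> S" and p: "p \<in> S"
  shows "2 * b u (u - p) = (Vnorm b u)\<^sup>2 - (Vnorm b p)\<^sup>2 + (Vnorm b (u - p))\<^sup>2"
proof -
  have up: "u - p \<in> S"
    using b u p by (simp add: hilbert_form_lin_subspace lin_subspace_diff)
  have "b (u - p) (u - p) = b u u - 2 * b u p + b p p"
    using hilbert_form_diff_left[OF b u p up] hilbert_form_diff_right[OF b u u p]
      hilbert_form_diff_right[OF b p u p] hilbert_form_sym[OF b u p] by simp
  then show ?thesis
    using hilbert_form_diff_right[OF b u u p]
    by (simp add: Vnorm_power2[OF b u] Vnorm_power2[OF b p] Vnorm_power2[OF b up])
qed

lemma ereal_shift_le_iff:
  "ereal t \<le> ereal (r + s) + e - ereal c \<longleftrightarrow> ereal (t - r) \<le> ereal s + e - ereal c"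
  by (cases e) auto

lemma powr_interpolation_le:
  fixes P w K g :: real
  assumes P: "0 \<le> P" and w: "0 \<le> w" and K: "0 < K" and g: "0 < g" "g \<le> 1"
  shows "P powr g * w powr (1 - g) \<le> K powr (1 - g) * P + w / K powr g"
proof (cases "w \<le> K * P")
  case True
  have "P powr g * w powr (1 - g) \<le> P powr g * (K * P) powr (1 - g)"
    using True w g by (simp add: mult_left_mono powr_mono2)
  also have "\<dots> = K powr (1 - g) * P"
  proof (cases "P = 0")
    case False
    then show ?thesis
      using P K by (simp add: powr_mult powr_add[symmetric])
  qed simp
  finally show ?thesis
    using w K by (smt (verit) divide_nonneg_pos powr_gt_zero)
next
  case False
  moreover have "0 \<le> K * P"
    using P K by simp
  ultimately have w_pos: "0 < w" and "P \<le> w / K"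
    using K by (auto simp: field_simps)
  then have "P powr g \<le> w powr g / K powr g"
    using P K g by (metis less_imp_le powr_divide powr_mono2)
  then have "P powr g * w powr (1 - g) \<le> w powr g * w powr (1 - g) / K powr g"
    by (metis mult_right_mono powr_ge_zero times_divide_eq_left)
  also have "\<dots> = w / K powr g"
    using w_pos by (simp add: powr_add[symmetric])
  finally show ?thesis
    using P K by (smt (verit) mult_nonneg_nonneg powr_ge_zero)
qed

lemma mult_powr_interpolation_le:
  fixes C \<epsilon> \<gamma> x y w :: real
  assumes C: "0 < C" and \<epsilon>: "0 < \<epsilon>" and \<gamma>: "0 < \<gamma>" "\<gamma> \<le> 1"
    and x: "0 \<le> x" and y: "0 \<le> y" and w: "0 \<le> w"
  shows "C * x * y powr \<gamma> * w powr (1 - \<gamma>)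
    \<le> C * (C / \<epsilon>) powr ((1 - \<gamma>) / \<gamma>) * (x powr (1 / \<gamma>) * y) + \<epsilon> * w"
proof -
  define K where "K = (C / \<epsilon>) powr (1 / \<gamma>)"
  define P where "P = x powr (1 / \<gamma>) * y"
  have K_pos: "0 < K" and K_pow: "K powr \<gamma> = C / \<epsilon>"
    and K_pow': "K powr (1 - \<gamma>) = (C / \<epsilon>) powr ((1 - \<gamma>) / \<gamma>)"
    using C \<epsilon> \<gamma> by (simp_all add: K_def powr_powr)
  have "x * y powr \<gamma> = P powr \<gamma>"
    using x y \<gamma> by (simp add: P_def powr_mult powr_powr)
  then have "C * x * y powr \<gamma> * w powr (1 - \<gamma>) = C * (P powr \<gamma> * w powr (1 - \<gamma>))"
    by (simp add: mult.assoc)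
  also have "\<dots> \<le> C * (K powr (1 - \<gamma>) * P + w / K powr \<gamma>)"
    using powr_interpolation_le[OF _ w K_pos \<gamma>] x y C by (simp add: P_def)
  also have "\<dots> = C * (C / \<epsilon>) powr ((1 - \<gamma>) / \<gamma>) * (x powr (1 / \<gamma>) * y) + \<epsilon> * w"
    using C \<epsilon> by (simp add: K_pow K_pow' P_def field_simps)
  finally show ?thesis .
qed

lemma absorption_estimate:
  fixes D F P Q b c\<^sub>1 c\<^sub>2 :: real
  assumes D: "0 \<le> D"
    and energy: "2 * D\<^sup>2 + Q \<le> 2 * D * (F + b)"
    and b: "b \<le> c\<^sub>1 * P + (F + D + b) / 8 + c\<^sub>2"
  shows "D\<^sup>2 + Q \<le> 20 * (1 + c\<^sub>1\<^sup>2 + c\<^sub>2\<^sup>2) * (P\<^sup>2 + F\<^sup>2 + 1)"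
proof -
  define G where "G = 8 * c\<^sub>1 * P + 8 * c\<^sub>2"
  have "7 * b \<le> G + F + D"
    using b by (simp add: G_def field_simps)
  then have "7 * (D * b) \<le> D * (G + F + D)"
    using mult_left_mono[OF _ D] by (metis mult.left_commute)
  moreover have "16/7 * D * F \<le> 4/7 * D\<^sup>2 + 16/7 * F\<^sup>2"
    using sum_squares_ge_zero[of "D - 2 * F" 0] by (simp add: power2_eq_square algebra_simps)
  moreover have "2/7 * D * G \<le> 1/7 * D\<^sup>2 + 1/7 * G\<^sup>2"
    using sum_squares_ge_zero[of "D - G" 0] by (simp add: power2_eq_square algebra_simps)
  ultimately have "D\<^sup>2 + Q \<le> 16/7 * F\<^sup>2 + 1/7 * G\<^sup>2"
    using energy by (simp add: power2_eq_square algebra_simps)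
  also have "\<dots> \<le> 16/7 * F\<^sup>2 + 128/7 * (c\<^sub>1\<^sup>2 * P\<^sup>2) + 128/7 * c\<^sub>2\<^sup>2"
    using sum_squares_ge_zero[of "8 * c\<^sub>1 * P - 8 * c\<^sub>2" 0]
    by (simp add: G_def power2_eq_square algebra_simps)
  also have "\<dots> \<le> 20 * (1 + c\<^sub>1\<^sup>2 + c\<^sub>2\<^sup>2) * (P\<^sup>2 + F\<^sup>2 + 1)"
  proof -
    have "20 * (1 + c\<^sub>1\<^sup>2 + c\<^sub>2\<^sup>2) * (P\<^sup>2 + F\<^sup>2 + 1) = 20 + 20 * F\<^sup>2 + 20 * P\<^sup>2
        + 20 * c\<^sub>1\<^sup>2 + 20 * c\<^sub>2\<^sup>2 + 20 * (F\<^sup>2 * c\<^sub>1\<^sup>2) + 20 * (F\<^sup>2 * c\<^sub>2\<^sup>2)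
        + 20 * (c\<^sub>1\<^sup>2 * P\<^sup>2) + 20 * (P\<^sup>2 * c\<^sub>2\<^sup>2)"
      by (simp add: algebra_simps)
    moreover have "0 \<le> F\<^sup>2 * c\<^sub>1\<^sup>2" "0 \<le> F\<^sup>2 * c\<^sub>2\<^sup>2" "0 \<le> P\<^sup>2 * c\<^sub>2\<^sup>2"
      "0 \<le> c\<^sub>1\<^sup>2 * P\<^sup>2"
      by simp_all
    ultimately show ?thesis
      using zero_le_power2[of F] zero_le_power2[of P] zero_le_power2[of c\<^sub>1] zero_le_power2[of c\<^sub>2]
      by linarith
  qed
  finally show ?thesis .
qed

lemma step_energy_inequality:
  fixes V :: "'h::real_inner set" and u p :: 'h and dt :: real
  defines "\<delta> \<equiv> (1 / dt) *\<^sub>R (u - p)"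
  assumes a: "hilbert_form V a" and u: "u \<in> V" and p: "p \<in> V" and dt: "0 < dt"
    and test: "(f - \<delta> - h) \<bullet> (p - u) \<le> a u (p - u) + (r\<^sub>p - r\<^sub>u)"
  shows "2 * (norm \<delta>)\<^sup>2 + ((Vnorm a u)\<^sup>2 - (Vnorm a p)\<^sup>2 + (Vnorm a (u - p))\<^sup>2) / dt
      + 2 * (r\<^sub>u - r\<^sub>p) / dt \<le> 2 * norm \<delta> * (norm f + norm h)"
proof -
  define Y where "Y = (Vnorm a u)\<^sup>2 - (Vnorm a p)\<^sup>2 + (Vnorm a (u - p))\<^sup>2"
  have "a u (p - u) = - Y / 2"
    using hilbert_form_diff_identity[OF a u p] hilbert_form_diff_right[OF a u p u]
      hilbert_form_diff_right[OF a u u p] by (simp add: Y_def)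
  moreover have "(f - \<delta> - h) \<bullet> (p - u) = dt * ((norm \<delta>)\<^sup>2 - f \<bullet> \<delta> + h \<bullet> \<delta>)"
  proof -
    have "p - u = - (dt *\<^sub>R \<delta>)"
      using dt by (simp add: \<delta>_def)
    then show ?thesis
      unfolding \<open>p - u = - (dt *\<^sub>R \<delta>)\<close>
      by (simp add: inner_diff_left power2_norm_eq_inner algebra_simps)
  qed
  moreover have "dt * (f \<bullet> \<delta> - h \<bullet> \<delta>) \<le> dt * (norm \<delta> * (norm f + norm h))"
    using Cauchy_Schwarz_ineq2[of f \<delta>] Cauchy_Schwarz_ineq2[of h \<delta>] dt
    by (intro mult_left_mono) (auto simp: algebra_simps)
  ultimately have energy: "dt * (norm \<delta>)\<^sup>2 + Y / 2 + (r\<^sub>u - r\<^sub>p) \<le> dt * (norm \<delta> * (norm f + norm h))"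
    using test by (simp add: algebra_simps)
  have "2 * (norm \<delta>)\<^sup>2 + Y / dt + 2 * (r\<^sub>u - r\<^sub>p) / dt
      = 2 / dt * (dt * (norm \<delta>)\<^sup>2 + Y / 2 + (r\<^sub>u - r\<^sub>p))"
    using dt by (simp add: field_simps)
  also have "\<dots> \<le> 2 / dt * (dt * (norm \<delta> * (norm f + norm h)))"
    using energy dt by (intro mult_left_mono) simp_all
  also have "\<dots> = 2 * norm \<delta> * (norm f + norm h)"
    using dt by simp
  finally show ?thesis
    by (simp add: Y_def)
qed

lemma H4_representative:
  assumes "H4 V a B W wi C \<gamma>" and "p \<in> V" and "u \<in> W"
  obtains h where "\<forall>v\<in>V. B p u v = h \<bullet> v"
    and "norm h \<le> C * Vnorm a p * Vnorm a u powr \<gamma> * Vnorm wi u powr (1 - \<gamma>)"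
proof -
  have "in_H V (B p u)"
    and bound: "normH V (B p u) \<le> C * Vnorm a p * Vnorm a u powr \<gamma> * Vnorm wi u powr (1 - \<gamma>)"
    using assms by (simp_all add: H4_def)
  \<comment> \<open>\<open>normH\<close> measures the representative chosen by SOME, so the bound holds for that one.\<close>
  define h where "h = (SOME h. \<forall>v\<in>V. B p u v = h \<bullet> v)"
  have "\<forall>v\<in>V. B p u v = h \<bullet> v"
    using \<open>in_H V (B p u)\<close> unfolding in_H_def h_def by (rule someI_ex)
  moreover have "norm h \<le> C * Vnorm a p * Vnorm a u powr \<gamma> * Vnorm wi u powr (1 - \<gamma>)"
    using bound by (simp add: normH_def h_def)
  ultimately show ?thesis
    by (rule that)
qed

lemma step_as_elliptic_inequality:
  fixes V :: "'h::real_inner set"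
  assumes a: "hilbert_form V a" and u: "u \<in> V" and r\<^sub>u: "phi u = ereal r\<^sub>u"
    and hB: "\<forall>v\<in>V. B p u v = h \<bullet> v"
    and step: "\<forall>v\<in>V. ereal (((1 / dt) *\<^sub>R (u - p)) \<bullet> (v - u) + a u (v - u) + B p u (v - u))
        + phi v - phi u \<ge> ereal (f \<bullet> (v - u))"
  shows "\<forall>v\<in>V. ereal (a u (v - u)) + phi v - phi u
      \<ge> ereal ((f - (1 / dt) *\<^sub>R (u - p) - h) \<bullet> (v - u))"
proof
  fix v assume v: "v \<in> V"
  then have "B p u (v - u) = h \<bullet> (v - u)"
    using a u hB by (simp add: hilbert_form_lin_subspace lin_subspace_diff)
  then have "ereal (f \<bullet> (v - u))
      \<le> ereal (((1 / dt) *\<^sub>R (u - p) + h) \<bullet> (v - u) + a u (v - u)) + phi v - ereal r\<^sub>u"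
    using bspec[OF step v] r\<^sub>u by (simp add: inner_add_left add_ac)
  then show "ereal (a u (v - u)) + phi v - phi u
      \<ge> ereal ((f - (1 / dt) *\<^sub>R (u - p) - h) \<bullet> (v - u))"
    unfolding ereal_shift_le_iff r\<^sub>u by (simp add: inner_diff_left algebra_simps)
qed

lemma nonlinear_term_absorption:
  fixes C \<gamma> Creg Cphi2 x y w b G F D :: real
  assumes C: "0 < C" and \<gamma>: "0 < \<gamma>" "\<gamma> \<le> 1" and Creg: "0 < Creg"
    and x: "0 \<le> x" and y: "0 \<le> y" and w: "0 \<le> w"
    and b: "b \<le> C * x * y powr \<gamma> * w powr (1 - \<gamma>)"
    and w_bound: "w \<le> Creg * G + Cphi2" and G: "G \<le> F + D + b"
  shows "b \<le> C * (8 * C * Creg) powr ((1 - \<gamma>) / \<gamma>) * (x powr (1 / \<gamma>) * y)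
      + (F + D + b) / 8 + Cphi2 / (8 * Creg)"
proof -
  have "b \<le> C * (8 * C * Creg) powr ((1 - \<gamma>) / \<gamma>) * (x powr (1 / \<gamma>) * y) + w / (8 * Creg)"
    using b mult_powr_interpolation_le[OF C _ \<gamma> x y w, of "1 / (8 * Creg)"] Creg
    by (simp add: mult_ac)
  moreover have "Creg * G \<le> Creg * (F + D + b)"
    using G Creg by (intro mult_left_mono) simp_all
  then have "w \<le> Creg * (F + D + b) + Cphi2"
    using w_bound by linarith
  then have "w / (8 * Creg) \<le> (Creg * (F + D + b) + Cphi2) / (8 * Creg)"
    using Creg by (intro divide_right_mono) simp_all
  moreover have "(Creg * (F + D + b) + Cphi2) / (8 * Creg) = (F + D + b) / 8 + Cphi2 / (8 * Creg)"
    using Creg by (simp add: add_divide_distrib)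
  ultimately show ?thesis
    by linarith
qed

definition energy_const :: "real \<Rightarrow> real \<Rightarrow> real \<Rightarrow> real \<Rightarrow> real" where
  "energy_const C \<gamma> Creg Cphi2 =
     20 * (1 + (C * (8 * C * Creg) powr ((1 - \<gamma>) / \<gamma>))\<^sup>2 + (Cphi2 / (8 * Creg))\<^sup>2)"

lemma energy_const_pos: "0 < energy_const C \<gamma> Creg Cphi2"
  by (simp add: energy_const_def add_pos_nonneg)

lemma semi_implicit_step_estimate:
  fixes V :: "'h::real_inner set"
  assumes a: "hilbert_form V a" and WV: "W \<subseteq> V" and wi: "hilbert_form W wi"
    and proper: "\<forall>v\<in>V. phi v \<noteq> -\<infinity>"
    and h4: "H4 V a B W wi C \<gamma>" and h5: "H5 V a phi W wi Creg Cphi2"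
    and dt: "0 < dt" and p: "p \<in> Dphi V phi" and u: "u \<in> W" "u \<in> Dphi V phi"
    and step: "\<forall>v\<in>V. ereal (((1 / dt) *\<^sub>R (u - p)) \<bullet> (v - u) + a u (v - u) + B p u (v - u))
        + phi v - phi u \<ge> ereal (f \<bullet> (v - u))"
  shows "(norm ((1 / dt) *\<^sub>R (u - p)))\<^sup>2
      + ((Vnorm a u)\<^sup>2 - (Vnorm a p)\<^sup>2 + (Vnorm a (u - p))\<^sup>2) / dt
      + 2 * (real_of_ereal (phi u) - real_of_ereal (phi p)) / dt
    \<le> energy_const C \<gamma> Creg Cphi2 * (Vnorm a p powr (2 * (1 / \<gamma>)) * (Vnorm a u)\<^sup>2 + (norm f)\<^sup>2 + 1)"
proof -
  have uV: "u \<in> V" and pV: "p \<in> V"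
    using u p WV by (auto simp: Dphi_def)
  have C: "0 < C" "0 < \<gamma>" "\<gamma> \<le> 1" and Creg: "0 < Creg"
    using h4 h5 by (simp_all add: H4_def H5_def)
  obtain r\<^sub>u r\<^sub>p where r\<^sub>u: "phi u = ereal r\<^sub>u" and r\<^sub>p: "phi p = ereal r\<^sub>p"
    using u(2) p proper uV pV unfolding Dphi_def by (cases "phi u"; cases "phi p") auto
  obtain h where hB: "\<forall>v\<in>V. B p u v = h \<bullet> v"
    and h_bound: "norm h \<le> C * Vnorm a p * Vnorm a u powr \<gamma> * Vnorm wi u powr (1 - \<gamma>)"
    using H4_representative[OF h4 pV u(1)] .
  define \<delta> where "\<delta> = (1 / dt) *\<^sub>R (u - p)"
  have VI: "\<forall>v\<in>V. ereal (a u (v - u)) + phi v - phi u \<ge> ereal ((f - \<delta> - h) \<bullet> (v - u))"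
    unfolding \<delta>_def by (rule step_as_elliptic_inequality[of V a u phi r\<^sub>u B p h, OF a uV r\<^sub>u hB step])
  then have "(f - \<delta> - h) \<bullet> (p - u) \<le> a u (p - u) + (r\<^sub>p - r\<^sub>u)"
    using pV r\<^sub>u r\<^sub>p by force
  then have energy: "2 * (norm \<delta>)\<^sup>2 + (((Vnorm a u)\<^sup>2 - (Vnorm a p)\<^sup>2 + (Vnorm a (u - p))\<^sup>2) / dt
      + 2 * (r\<^sub>u - r\<^sub>p) / dt) \<le> 2 * norm \<delta> * (norm f + norm h)"
    unfolding \<delta>_def using step_energy_inequality[OF a uV pV dt] by (simp add: add.assoc)
  have "Vnorm wi u \<le> Creg * norm (f - \<delta> - h) + Cphi2"
    using h5 u(2) VI unfolding H5_def by blast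
  moreover have "norm (f - \<delta> - h) \<le> norm f + norm \<delta> + norm h"
    by (meson add_right_mono norm_triangle_ineq4 order_trans)
  ultimately have "norm h \<le> C * (8 * C * Creg) powr ((1 - \<gamma>) / \<gamma>) * (Vnorm a p powr (1 / \<gamma>) * Vnorm a u)
      + (norm f + norm \<delta> + norm h) / 8 + Cphi2 / (8 * Creg)"
    using nonlinear_term_absorption[OF C Creg Vnorm_nonneg[OF a pV] Vnorm_nonneg[OF a uV]
        Vnorm_nonneg[OF wi u(1)] h_bound] by blast
  note estimate = absorption_estimate[OF norm_ge_zero energy this]
  have "(Vnorm a p powr (1 / \<gamma>) * Vnorm a u)\<^sup>2 = Vnorm a p powr (2 * (1 / \<gamma>)) * (Vnorm a u)\<^sup>2"
    by (simp add: power_mult_distrib powr_mult_base power2_eq_square powr_add[symmetric])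
  then show ?thesis
    using estimate by (simp add: \<delta>_def r\<^sub>u r\<^sub>p energy_const_def add_divide_distrib add.assoc)
qed

theorem mainTheorem5:
  shows "\<exists>M :: real \<Rightarrow> real \<Rightarrow> real \<Rightarrow> real \<Rightarrow> real.
   \<forall>C \<gamma> Creg Cphi2.
    (C > 0 \<and> 0 < \<gamma> \<and> \<gamma> \<le> 1 \<and> Creg > 0 \<and> Cphi2 > 0 \<longrightarrow> M C \<gamma> Creg Cphi2 > 0) \<and>
    (\<forall>(V :: 'h::{real_inner,banach,second_countable_topology} set) a B CB phi W wi.
      gelfand_setting V a \<and> B_ok V a B CB \<and> phi_ok V a phi \<and> W_ok V a W wi
      \<and> H4 V a B W wi C \<gamma> \<and> H5 V a phi W wi Creg Cphi2 \<longrightarrow>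
      (\<forall>T u0 f dt N u.
         T > 0 \<and> u0 \<in> Dphi V phi \<and> L2H T f \<and> dt > 0 \<and> real N * dt \<le> T
         \<and> u 0 = u0 \<and> (\<forall>n\<in>{1..N}. u n \<in> W \<inter> Dphi V phi)
         \<and> scheme V a B phi f dt N u \<longrightarrow>
         (\<forall>n\<in>{1..N}.
            (norm ((1 / dt) *\<^sub>R (u n - u (n - 1))))\<^sup>2
            + ((Vnorm a (u n))\<^sup>2 - (Vnorm a (u (n - 1)))\<^sup>2 + (Vnorm a (u n - u (n - 1)))\<^sup>2) / dt
            + 2 * (real_of_ereal (phi (u n)) - real_of_ereal (phi (u (n - 1)))) / dt
            \<le> M C \<gamma> Creg Cphi2 * (Vnorm a (u (n - 1)) powr (2 * (1 / \<gamma>)) * (Vnorm a (u n))\<^sup>2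
                                   + (norm (favg f dt n))\<^sup>2 + 1))))"
proof (intro exI[of _ energy_const] allI conjI impI ballI, goal_cases)
  case 1
  show ?case
    by (rule energy_const_pos)
next
  case (2 C \<gamma> Creg Cphi2 V a B CB phi W wi T u0 f dt N u n)
  then have "n - 1 = 0 \<or> n - 1 \<in> {1..N}"
    by auto
  with 2 have p: "u (n - 1) \<in> Dphi V phi"
    by auto
  from 2 have hyp: "H4 V a B W wi C \<gamma>" "H5 V a phi W wi Creg Cphi2" "0 < dt"
    and u: "u n \<in> W" "u n \<in> Dphi V phi"
    by auto
  from 2 have a: "hilbert_form V a" and W: "W \<subseteq> V" "hilbert_form W wi"
    and proper: "\<forall>v\<in>V. phi v \<noteq> -\<infinity>"
    by (simp_all add: gelfand_setting_def W_ok_def phi_ok_def)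
  from 2 have "scheme V a B phi f dt N u"
    by blast
  note step = bspec[OF this[unfolded scheme_def] \<open>n \<in> {1..N}\<close>]
  show ?case
    by (rule semi_implicit_step_estimate[OF a W proper hyp p u step])
qed

end
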